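(* Let $K$ and $L$ be $n$-element finite sets, $M=K\times L$, and let $u=(u_{kl})$ be a unitary matrix indexed by $K\times L$ all of whose entries are nonzero. Let $G$ be a symmetry group of $u$ with associated representations $S$ on $F(K)$ and $R$ on $F(M)$ (as defined in the context). Then for every $g\in G$ and $f\in F(M)$, $$C_u(R_gf)=S_g\,(C_uf)\,S_g^*\quad\text{and}\quad D_u(R_gf)=S_g\,(D_uf)\,S_g^*.$$
   Context: For a finite set $J$, $F(J)$ denotes the space of complex-valued functions on $J$, with standard Hermitian product $\sum_j\varphi_j\bar\psi_j$. For $f=(f_{kl})\in F(M)$, $C_uf$ and $D_uf$ are the operators on $F(K)$ with matrices $x_{kk'}=\sum_{l\in L}u_{kl}f_{kl}\bar u_{k'l}$ and $y_{kk'}=\sum_{l\in L}u_{kl}f_{k'l}\bar u_{k'l}$ respectively. Let $\mathcal U:F(L)\to F(K)$ be $(\mathcal U\psi)_k=\sum_{l}u_{kl}\psi_l$. A group $G$ is called a symmetry group of $u$ if $G$ acts on the left on the sets $K$ and $L$, and there are faithful unitary representations $S$ on $F(K)$ and $T$ on $F(L)$ of the form $(S_g\varphi)_k=a_k(g)\varphi_{g^{-1}k}$, $(T_g\psi)_l=b_l(g)\psi_{g^{-1}l}$, where $|a_k(g)|=|b_l(g)|=1$, such that $S_g\mathcal U=\mathcal U T_g$ for all $g\in G$. The representation $R$ of $G$ on $F(M)$ is $(R_gf)_{kl}=f_{g^{-1}k\,g^{-1}l}$. *)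

theory Defs
  imports "HOL-Analysis.Analysis" "HOL-Algebra.Group_Action"
begin

text \<open>Functions in F(J) are modelled as total functions on the ambient type, only their
values on J matter. Operators on F(K) are represented by their matrices, i.e. functions
'k \<Rightarrow> 'k \<Rightarrow> complex, of which only entries indexed by K \<times> K matter.\<close>

definition unitary_mat :: "'k set \<Rightarrow> 'l set \<Rightarrow> ('k \<Rightarrow> 'l \<Rightarrow> complex) \<Rightarrow> bool" where
  "unitary_mat K L u \<longleftrightarrow>
     (\<forall>k\<in>K. \<forall>k'\<in>K. (\<Sum>l\<in>L. u k l * cnj (u k' l)) = (if k = k' then 1 else 0)) \<and>
     (\<forall>l\<in>L. \<forall>l'\<in>L. (\<Sum>k\<in>K. cnj (u k l) * u k l') = (if l = l' then 1 else 0))"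

definition Cop :: "'l set \<Rightarrow> ('k \<Rightarrow> 'l \<Rightarrow> complex) \<Rightarrow> ('k \<Rightarrow> 'l \<Rightarrow> complex) \<Rightarrow> 'k \<Rightarrow> 'k \<Rightarrow> complex" where
  "Cop L u f k k' = (\<Sum>l\<in>L. u k l * f k l * cnj (u k' l))"

definition Dop :: "'l set \<Rightarrow> ('k \<Rightarrow> 'l \<Rightarrow> complex) \<Rightarrow> ('k \<Rightarrow> 'l \<Rightarrow> complex) \<Rightarrow> 'k \<Rightarrow> 'k \<Rightarrow> complex" where
  "Dop L u f k k' = (\<Sum>l\<in>L. u k l * f k' l * cnj (u k' l))"

definition Uop :: "'l set \<Rightarrow> ('k \<Rightarrow> 'l \<Rightarrow> complex) \<Rightarrow> ('l \<Rightarrow> complex) \<Rightarrow> 'k \<Rightarrow> complex" where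
  "Uop L u \<psi> k = (\<Sum>l\<in>L. u k l * \<psi> l)"

definition wperm :: "('g, 'b) monoid_scheme \<Rightarrow> ('g \<Rightarrow> 'j \<Rightarrow> 'j) \<Rightarrow> ('j \<Rightarrow> 'g \<Rightarrow> complex)
    \<Rightarrow> 'g \<Rightarrow> ('j \<Rightarrow> complex) \<Rightarrow> 'j \<Rightarrow> complex" where
  "wperm G act c g \<phi> j = c j g * \<phi> (act (inv\<^bsub>G\<^esub> g) j)"

definition wperm_mat :: "('g, 'b) monoid_scheme \<Rightarrow> ('g \<Rightarrow> 'j \<Rightarrow> 'j) \<Rightarrow> ('j \<Rightarrow> 'g \<Rightarrow> complex)
    \<Rightarrow> 'g \<Rightarrow> 'j \<Rightarrow> 'j \<Rightarrow> complex" where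
  "wperm_mat G act c g k j = wperm G act c g (\<lambda>i. if i = j then 1 else 0) k"

definition mat_mult :: "'k set \<Rightarrow> ('k \<Rightarrow> 'k \<Rightarrow> complex) \<Rightarrow> ('k \<Rightarrow> 'k \<Rightarrow> complex) \<Rightarrow> 'k \<Rightarrow> 'k \<Rightarrow> complex" where
  "mat_mult K A B k k' = (\<Sum>j\<in>K. A k j * B j k')"

definition mat_adj :: "('k \<Rightarrow> 'k \<Rightarrow> complex) \<Rightarrow> 'k \<Rightarrow> 'k \<Rightarrow> complex" where
  "mat_adj A k k' = cnj (A k' k)"

definition Rop :: "('g, 'b) monoid_scheme \<Rightarrow> ('g \<Rightarrow> 'k \<Rightarrow> 'k) \<Rightarrow> ('g \<Rightarrow> 'l \<Rightarrow> 'l)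
    \<Rightarrow> 'g \<Rightarrow> ('k \<Rightarrow> 'l \<Rightarrow> complex) \<Rightarrow> 'k \<Rightarrow> 'l \<Rightarrow> complex" where
  "Rop G actK actL g f k l = f (actK (inv\<^bsub>G\<^esub> g) k) (actL (inv\<^bsub>G\<^esub> g) l)"

definition wperm_faithful_rep :: "('g, 'b) monoid_scheme \<Rightarrow> 'j set \<Rightarrow> ('g \<Rightarrow> 'j \<Rightarrow> 'j)
    \<Rightarrow> ('j \<Rightarrow> 'g \<Rightarrow> complex) \<Rightarrow> bool" where
  "wperm_faithful_rep G J act c \<longleftrightarrow>
     (\<forall>g\<in>carrier G. \<forall>j\<in>J. cmod (c j g) = 1) \<and>
     (\<forall>\<phi>. \<forall>j\<in>J. wperm G act c \<one>\<^bsub>G\<^esub> \<phi> j = \<phi> j) \<and>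
     (\<forall>g\<in>carrier G. \<forall>h\<in>carrier G. \<forall>\<phi>. \<forall>j\<in>J.
        wperm G act c (g \<otimes>\<^bsub>G\<^esub> h) \<phi> j = wperm G act c g (wperm G act c h \<phi>) j) \<and>
     (\<forall>g\<in>carrier G. \<forall>h\<in>carrier G.
        (\<forall>\<phi>. \<forall>j\<in>J. wperm G act c g \<phi> j = wperm G act c h \<phi> j) \<longrightarrow> g = h)"

definition symmetry_group :: "('g, 'b) monoid_scheme \<Rightarrow> 'k set \<Rightarrow> 'l set \<Rightarrow> ('k \<Rightarrow> 'l \<Rightarrow> complex)
    \<Rightarrow> ('g \<Rightarrow> 'k \<Rightarrow> 'k) \<Rightarrow> ('g \<Rightarrow> 'l \<Rightarrow> 'l) \<Rightarrow> ('k \<Rightarrow> 'g \<Rightarrow> complex) \<Rightarrow> ('l \<Rightarrow> 'g \<Rightarrow> complex) \<Rightarrow> bool" where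
  "symmetry_group G K L u actK actL a b \<longleftrightarrow>
     group G \<and> group_action G K actK \<and> group_action G L actL \<and>
     wperm_faithful_rep G K actK a \<and> wperm_faithful_rep G L actL b \<and>
     (\<forall>g\<in>carrier G. \<forall>\<psi>. \<forall>k\<in>K.
        wperm G actK a g (Uop L u \<psi>) k = Uop L u (wperm G actL b g \<psi>) k)"

end

theory Submission
  imports Defs
begin

text \<open>Testing the intertwining relation \<open>S\<^sub>g \<U> = \<U> T\<^sub>g\<close> on the unit vector at \<open>l\<close> gives
  \<open>a\<^sub>k(g) u\<^bsub>g\<^sup>-\<^sup>1k, l\<^esub> = u\<^bsub>k, gl\<^esub> b\<^bsub>gl\<^esub>(g)\<close>. Reindexing the sums defining \<open>C\<^sub>u(R\<^sub>gf)\<close> and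
  \<open>D\<^sub>u(R\<^sub>gf)\<close> by \<open>l \<mapsto> gl\<close> and substituting this relation, the phases \<open>b\<close> cancel because
  \<open>|b| = 1\<close>, and what remains is the matrix of \<open>C\<^sub>uf\<close> resp. \<open>D\<^sub>uf\<close> at \<open>(g\<^sup>-\<^sup>1k, g\<^sup>-\<^sup>1k')\<close>
  multiplied by \<open>a\<^sub>k(g)\<close> and \<open>conj (a\<^sub>k\<^sub>'(g))\<close>, i.e. the matrix of \<open>S\<^sub>g (C\<^sub>uf) S\<^sub>g\<^sup>*\<close> resp.
  \<open>S\<^sub>g (D\<^sub>uf) S\<^sub>g\<^sup>*\<close>.\<close>

lemma (in group_action) inv_action_eq_iff:
  assumes "g \<in> carrier G" and "x \<in> E" and "y \<in> E"
  shows "\<phi> (inv g) x = y \<longleftrightarrow> x = \<phi> g y"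
proof -
  interpret group G by (rule group_hom.axioms(1)[OF group_hom])
  show ?thesis
    using orbit_sym_aux[OF assms(1,3)] orbit_sym_aux[OF inv_closed[OF assms(1)] assms(2)] assms(1)
    by auto
qed

lemma wperm_mat_eq: "wperm_mat G act c g k j = (if act (inv\<^bsub>G\<^esub> g) k = j then c k g else 0)"
  by (simp add: wperm_mat_def wperm_def)

lemma mat_mult_wperm_mat_left:
  assumes "finite K" and "act (inv\<^bsub>G\<^esub> g) k \<in> K"
  shows "mat_mult K (wperm_mat G act c g) X k j = c k g * X (act (inv\<^bsub>G\<^esub> g) k) j"
proof -
  have "mat_mult K (wperm_mat G act c g) X k j
      = (\<Sum>i\<in>K. if act (inv\<^bsub>G\<^esub> g) k = i then c k g * X i j else 0)"
    unfolding mat_mult_def wperm_mat_eq by (rule sum.cong) auto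
  then show ?thesis
    using assms by (simp add: sum.delta)
qed

lemma mat_mult_mat_adj_wperm_mat_right:
  assumes "finite K" and "act (inv\<^bsub>G\<^esub> g) k' \<in> K"
  shows "mat_mult K Y (mat_adj (wperm_mat G act c g)) k k' = Y k (act (inv\<^bsub>G\<^esub> g) k') * cnj (c k' g)"
proof -
  have "mat_mult K Y (mat_adj (wperm_mat G act c g)) k k'
      = (\<Sum>i\<in>K. if act (inv\<^bsub>G\<^esub> g) k' = i then Y k i * cnj (c k' g) else 0)"
    unfolding mat_mult_def mat_adj_def wperm_mat_eq by (rule sum.cong) auto
  then show ?thesis
    using assms by (simp add: sum.delta)
qed

lemma wperm_mat_conjugate:
  assumes "finite K" and "group_action G K act" and "g \<in> carrier G" and "k \<in> K" and "k' \<in> K"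
  shows "mat_mult K (mat_mult K (wperm_mat G act c g) X) (mat_adj (wperm_mat G act c g)) k k'
    = c k g * X (act (inv\<^bsub>G\<^esub> g) k) (act (inv\<^bsub>G\<^esub> g) k') * cnj (c k' g)"
proof -
  interpret group_action G K act by (rule assms(2))
  have "\<And>x. x \<in> K \<Longrightarrow> act (inv\<^bsub>G\<^esub> g) x \<in> K"
    using element_image assms(3) group.inv_closed[OF group_hom.axioms(1)[OF group_hom]] by blast
  then show ?thesis
    using assms(1,4,5) by (simp add: mat_mult_mat_adj_wperm_mat_right mat_mult_wperm_mat_left)
qed

lemma
  assumes "symmetry_group G K L u actK actL a b"
  shows symmetry_group_action_K: "group_action G K actK"
    and symmetry_group_action_L: "group_action G L actL"
    and symmetry_group_phase_L: "g \<in> carrier G \<Longrightarrow> l \<in> L \<Longrightarrow> cmod (b l g) = 1"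
    and symmetry_group_intertwines: "g \<in> carrier G \<Longrightarrow> k \<in> K \<Longrightarrow>
      wperm G actK a g (Uop L u \<psi>) k = Uop L u (wperm G actL b g \<psi>) k"
  using assms unfolding symmetry_group_def wperm_faithful_rep_def by simp_all

lemma symmetry_group_entry_relation:
  assumes sym: "symmetry_group G K L u actK actL a b" and "finite L"
    and g: "g \<in> carrier G" and k: "k \<in> K" and l: "l \<in> L"
  shows "a k g * u (actK (inv\<^bsub>G\<^esub> g) k) l = u k (actL g l) * b (actL g l) g"
proof -
  define \<delta> where "\<delta> = (\<lambda>l'. if l' = l then (1::complex) else 0)"
  note actL = symmetry_group_action_L[OF sym]
  have gl: "actL g l \<in> L"
    using group_action.element_image[OF actL g l] by blast
  have "wperm G actK a g (Uop L u \<delta>) k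
      = a k g * (\<Sum>l'\<in>L. if l' = l then u (actK (inv\<^bsub>G\<^esub> g) k) l' else 0)"
    unfolding wperm_def Uop_def \<delta>_def by (simp add: if_distrib[of "\<lambda>x. _ * x"] cong: if_cong)
  then have "a k g * u (actK (inv\<^bsub>G\<^esub> g) k) l = wperm G actK a g (Uop L u \<delta>) k"
    using assms(2) l by (simp add: sum.delta')
  also have "\<dots> = Uop L u (wperm G actL b g \<delta>) k"
    by (rule symmetry_group_intertwines[OF sym g k])
  also have "\<dots> = (\<Sum>l'\<in>L. if l' = actL g l then u k l' * b l' g else 0)"
    unfolding Uop_def wperm_def \<delta>_def
    by (rule sum.cong) (auto simp: group_action.inv_action_eq_iff[OF actL g] l)
  also have "\<dots> = u k (actL g l) * b (actL g l) g"
    using gl assms(2) by (simp add: sum.delta')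
  finally show ?thesis .
qed

lemma symmetry_group_conjugate_sum:
  assumes sym: "symmetry_group G K L u actK actL a b" and "finite L"
    and g: "g \<in> carrier G" and k: "k \<in> K" and k': "k' \<in> K"
  shows "(\<Sum>l\<in>L. u k l * F (actL (inv\<^bsub>G\<^esub> g) l) * cnj (u k' l))
    = a k g * (\<Sum>l\<in>L. u (actK (inv\<^bsub>G\<^esub> g) k) l * F l * cnj (u (actK (inv\<^bsub>G\<^esub> g) k') l)) * cnj (a k' g)"
proof -
  let ?h = "inv\<^bsub>G\<^esub> g"
  note actL = symmetry_group_action_L[OF sym]
  have bij: "bij_betw (actL g) L L"
    using group_action.bij_prop0[OF actL g] by (simp add: Bij_def)
  have gl: "actL g l \<in> L" if "l \<in> L" for l
    using bij that by (simp add: bij_betw_apply)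
  have inv_g_cancel: "actL ?h (actL g l) = l" if "l \<in> L" for l
    using group_action.inv_action_eq_iff[OF actL g gl[OF that] that] by simp
  have b_unimodular: "b (actL g l) g * cnj (b (actL g l) g) = 1" if "l \<in> L" for l
    using symmetry_group_phase_L[OF sym g gl[OF that]] by (simp add: complex_norm_square[symmetric])
  have "(\<Sum>l\<in>L. u k l * F (actL ?h l) * cnj (u k' l))
      = (\<Sum>l\<in>L. u k (actL g l) * F l * cnj (u k' (actL g l)))"
    by (subst sum.reindex_bij_betw[OF bij, symmetric])
      (simp add: inv_g_cancel)
  also have "\<dots> = (\<Sum>l\<in>L. (u k (actL g l) * b (actL g l) g) * F l
                          * cnj (u k' (actL g l) * b (actL g l) g))"
  proof (rule sum.cong[OF refl])
    fix l assume "l \<in> L"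
    then have "u k (actL g l) * F l * cnj (u k' (actL g l))
        = u k (actL g l) * F l * cnj (u k' (actL g l)) * (b (actL g l) g * cnj (b (actL g l) g))"
      using b_unimodular by simp
    then show "u k (actL g l) * F l * cnj (u k' (actL g l))
        = (u k (actL g l) * b (actL g l) g) * F l * cnj (u k' (actL g l) * b (actL g l) g)"
      by (simp add: ac_simps)
  qed
  also have "\<dots> = (\<Sum>l\<in>L. a k g * u (actK ?h k) l * F l * cnj (a k' g * u (actK ?h k') l))"
    by (rule sum.cong[OF refl])
      (simp add: symmetry_group_entry_relation[OF sym assms(2) g k] symmetry_group_entry_relation[OF sym assms(2) g k'])
  also have "\<dots> = a k g * (\<Sum>l\<in>L. u (actK ?h k) l * F l * cnj (u (actK ?h k') l)) * cnj (a k' g)"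
    by (simp add: sum_distrib_left sum_distrib_right ac_simps)
  finally show ?thesis .
qed

theorem proposition3p2:
  fixes K :: "'k set" and L :: "'l set" and n :: nat
    and u :: "'k \<Rightarrow> 'l \<Rightarrow> complex"
    and G :: "('g, 'b) monoid_scheme"
    and actK :: "'g \<Rightarrow> 'k \<Rightarrow> 'k" and actL :: "'g \<Rightarrow> 'l \<Rightarrow> 'l"
    and a :: "'k \<Rightarrow> 'g \<Rightarrow> complex" and b :: "'l \<Rightarrow> 'g \<Rightarrow> complex"
  assumes "finite K" and "finite L" and "card K = n" and "card L = n"
    and "unitary_mat K L u"
    and "\<forall>k\<in>K. \<forall>l\<in>L. u k l \<noteq> 0"
    and "symmetry_group G K L u actK actL a b"
    and "g \<in> carrier G"
  shows "\<forall>k\<in>K. \<forall>k'\<in>K.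
      Cop L u (Rop G actK actL g f) k k' =
        mat_mult K (mat_mult K (wperm_mat G actK a g) (Cop L u f)) (mat_adj (wperm_mat G actK a g)) k k'
    \<and> Dop L u (Rop G actK actL g f) k k' =
        mat_mult K (mat_mult K (wperm_mat G actK a g) (Dop L u f)) (mat_adj (wperm_mat G actK a g)) k k'"
proof (intro ballI conjI)
  fix k k' assume k: "k \<in> K" and k': "k' \<in> K"
  note conj_sum = symmetry_group_conjugate_sum[OF assms(7,2,8) k k']
  note conj_mat = wperm_mat_conjugate[OF assms(1) symmetry_group_action_K[OF assms(7)] assms(8) k k']
  show "Cop L u (Rop G actK actL g f) k k' =
      mat_mult K (mat_mult K (wperm_mat G actK a g) (Cop L u f)) (mat_adj (wperm_mat G actK a g)) k k'"
    unfolding conj_mat Cop_def Rop_def using conj_sum[of "f (actK (inv\<^bsub>G\<^esub> g) k)"] by simp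
  show "Dop L u (Rop G actK actL g f) k k' =
      mat_mult K (mat_mult K (wperm_mat G actK a g) (Dop L u f)) (mat_adj (wperm_mat G actK a g)) k k'"
    unfolding conj_mat Dop_def Rop_def using conj_sum[of "f (actK (inv\<^bsub>G\<^esub> g) k')"] by simp
qed

end
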